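(* Let $k$ be an algebraically closed field of characteristic zero, $n\ge1$, $q\in k$ a primitive $2n$-th root of unity, $a\in k$, and let $H_{4n}$ be the Hopf algebra generated by $z,x$ with relations $z^{2n}=1$, $zx=qxz$, $x^2=0$ and $\Delta(z)=z\otimes z+a(1-q^{-2})z^{n+1}x\otimes zx$, $\Delta(x)=x\otimes 1+z^n\otimes x$, $\epsilon(z)=1$, $\epsilon(x)=0$, $S(z)=z^{-1}$, $S(x)=-z^nx$. For integers $j$ let $E_j=\frac{1}{2n}\sum_{i=0}^{2n-1}q^{-ij}z^i$. Then $H_{4n}$ is a quasi-triangular Hopf algebra with universal $R$-matrix $$R=\sum_{i,j=0}^{2n-1}(-1)^{ij}E_i\otimes E_j+2a\sum_{i,j=0}^{2n-1}(-1)^{i(j+1)}E_ix\otimes E_jx.$$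
   Context: A pair $(H,R)$ with $H$ a finite-dimensional Hopf algebra and $R\in H\otimes H$ invertible is quasi-triangular (with universal $R$-matrix $R$) if $\Delta^{op}(h)=R\Delta(h)R^{-1}$ for all $h\in H$, $(\Delta\otimes \mathrm{id})(R)=R_{13}R_{23}$ and $(\mathrm{id}\otimes\Delta)(R)=R_{13}R_{12}$, where $\Delta^{op}=\tau\circ\Delta$ with $\tau$ the flip, $R_{12}=R\otimes 1$, $R_{23}=1\otimes R$, $R_{13}=(\tau\otimes\mathrm{id})(R_{23})$. *)

theory Defs
  imports "HOL-Computational_Algebra.Polynomial"
begin

text \<open>
  By the relations z^{2n}=1, zx=qxz, x^2=0 the algebra has
  the basis z^i x^e (0 <= i < 2n, e in {0,1}), with multiplication
  z^i x^e * z^j x^f = q^{-ej} z^{i+j} x^{e+f}  (zero if e+f = 2).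
  A basis element of H^{\<otimes>m} is a word of length m of index pairs (i,e);
  an element of H^{\<otimes>m} is a coefficient function on words, supported on valid words.
\<close>

type_synonym 'k tens = "(nat \<times> nat) list \<Rightarrow> 'k"

definition Wd :: "nat \<Rightarrow> nat \<Rightarrow> (nat \<times> nat) list set" where
  "Wd n m = {w. length w = m \<and> (\<forall>p\<in>set w. fst p < 2*n \<and> snd p < 2)}"

definition supported :: "nat \<Rightarrow> nat \<Rightarrow> 'k::zero tens \<Rightarrow> bool" where
  "supported n m f \<longleftrightarrow> (\<forall>w. w \<notin> Wd n m \<longrightarrow> f w = 0)"

definition bcoef :: "'k::field \<Rightarrow> nat \<times> nat \<Rightarrow> nat \<times> nat \<Rightarrow> 'k" where
  "bcoef q u v = (if snd u + snd v < 2 then inverse q ^ (snd u * fst v) else 0)"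

definition bidx :: "nat \<Rightarrow> nat \<times> nat \<Rightarrow> nat \<times> nat \<Rightarrow> nat \<times> nat" where
  "bidx n u v = ((fst u + fst v) mod (2*n), snd u + snd v)"

definition wcoef :: "'k::field \<Rightarrow> (nat \<times> nat) list \<Rightarrow> (nat \<times> nat) list \<Rightarrow> 'k" where
  "wcoef q u v = (\<Prod>k<length u. bcoef q (u!k) (v!k))"

definition widx :: "nat \<Rightarrow> (nat \<times> nat) list \<Rightarrow> (nat \<times> nat) list \<Rightarrow> (nat \<times> nat) list" where
  "widx n u v = map2 (bidx n) u v"

definition tmul :: "nat \<Rightarrow> 'k::field \<Rightarrow> nat \<Rightarrow> 'k tens \<Rightarrow> 'k tens \<Rightarrow> 'k tens" where
  "tmul n q m f g = (\<lambda>w. \<Sum>u\<in>Wd n m. \<Sum>v\<in>Wd n m.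
       if widx n u v = w then f u * g v * wcoef q u v else 0)"

definition basis_el :: "(nat \<times> nat) list \<Rightarrow> 'k::{zero,one} tens" where
  "basis_el u = (\<lambda>w. if w = u then 1 else 0)"

definition tone :: "nat \<Rightarrow> 'k::{zero,one} tens" where
  "tone m = basis_el (replicate m (0,0))"

definition tzero :: "'k::zero tens" where
  "tzero = (\<lambda>w. 0)"

definition tadd :: "'k::plus tens \<Rightarrow> 'k tens \<Rightarrow> 'k tens" where
  "tadd f g = (\<lambda>w. f w + g w)"

definition tscale :: "'k::times \<Rightarrow> 'k tens \<Rightarrow> 'k tens" where
  "tscale c f = (\<lambda>w. c * f w)"

definition tsum :: "('a \<Rightarrow> 'k::comm_monoid_add tens) \<Rightarrow> 'a set \<Rightarrow> 'k tens" where
  "tsum F A = (\<lambda>w. \<Sum>a\<in>A. F a w)"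

fun tpow :: "nat \<Rightarrow> 'k::field \<Rightarrow> nat \<Rightarrow> 'k tens \<Rightarrow> nat \<Rightarrow> 'k tens" where
  "tpow n q m f 0 = tone m"
| "tpow n q m f (Suc k) = tmul n q m (tpow n q m f k) f"

definition ttensor :: "nat \<Rightarrow> nat \<Rightarrow> 'k::{times,zero} tens \<Rightarrow> 'k tens \<Rightarrow> 'k tens" where
  "ttensor m1 m2 f g = (\<lambda>w. if length w = m1 + m2 then f (take m1 w) * g (drop m1 w) else 0)"

definition linext :: "nat \<Rightarrow> nat \<Rightarrow> ((nat \<times> nat) list \<Rightarrow> 'k::comm_ring_1 tens) \<Rightarrow> 'k tens \<Rightarrow> 'k tens" where
  "linext n m D f = (\<lambda>w. \<Sum>u\<in>Wd n m. f u * D u w)"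

definition zgen :: "nat \<Rightarrow> 'k::{zero,one} tens" where
  "zgen n = basis_el [(1 mod (2*n), 0)]"

definition xgen :: "'k::{zero,one} tens" where
  "xgen = basis_el [(0, 1)]"

definition Hmul where "Hmul n q = tmul n q 1"
definition H2mul where "H2mul n q = tmul n q 2"
definition H3mul where "H3mul n q = tmul n q 3"

definition zpow :: "nat \<Rightarrow> 'k::field \<Rightarrow> nat \<Rightarrow> 'k tens" where
  "zpow n q i = tpow n q 1 (zgen n) i"

definition Delta_z :: "nat \<Rightarrow> 'k::field \<Rightarrow> 'k \<Rightarrow> 'k tens" where
  "Delta_z n q a = tadd (ttensor 1 1 (zgen n) (zgen n))
     (tscale (a * (1 - inverse q ^ 2))
        (ttensor 1 1 (Hmul n q (zpow n q (n+1)) xgen) (Hmul n q (zgen n) xgen)))"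

definition Delta_x :: "nat \<Rightarrow> 'k::field \<Rightarrow> 'k tens" where
  "Delta_x n q = tadd (ttensor 1 1 xgen (tone 1)) (ttensor 1 1 (zpow n q n) xgen)"

definition Delta_basis :: "nat \<Rightarrow> 'k::field \<Rightarrow> 'k \<Rightarrow> (nat \<times> nat) list \<Rightarrow> 'k tens" where
  "Delta_basis n q a u = H2mul n q (tpow n q 2 (Delta_z n q a) (fst (hd u)))
                                   (tpow n q 2 (Delta_x n q) (snd (hd u)))"

definition Delta :: "nat \<Rightarrow> 'k::field \<Rightarrow> 'k \<Rightarrow> 'k tens \<Rightarrow> 'k tens" where
  "Delta n q a = linext n 1 (Delta_basis n q a)"

definition flip2 :: "'k tens \<Rightarrow> 'k tens" where
  "flip2 f = (\<lambda>w. f (rev w))"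

definition Delta_op where "Delta_op n q a h = flip2 (Delta n q a h)"

definition Delta_id :: "nat \<Rightarrow> 'k::field \<Rightarrow> 'k \<Rightarrow> 'k tens \<Rightarrow> 'k tens" where
  "Delta_id n q a = linext n 2 (\<lambda>u. ttensor 2 1 (Delta n q a (basis_el [u!0])) (basis_el [u!1]))"

definition id_Delta :: "nat \<Rightarrow> 'k::field \<Rightarrow> 'k \<Rightarrow> 'k tens \<Rightarrow> 'k tens" where
  "id_Delta n q a = linext n 2 (\<lambda>u. ttensor 1 2 (basis_el [u!0]) (Delta n q a (basis_el [u!1])))"

definition R12 :: "'k::{zero,one,times} tens \<Rightarrow> 'k tens" where
  "R12 R = ttensor 2 1 R (tone 1)"
definition R23 :: "'k::{zero,one,times} tens \<Rightarrow> 'k tens" where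
  "R23 R = ttensor 1 2 (tone 1) R"
definition R13 :: "'k::{zero,one,times} tens \<Rightarrow> 'k tens" where
  "R13 R = (\<lambda>w. if length w = 3 then R [w!0, w!2] * tone 1 [w!1] else 0)"

definition quasi_triangular :: "nat \<Rightarrow> 'k::field \<Rightarrow> 'k \<Rightarrow> 'k tens \<Rightarrow> bool" where
  "quasi_triangular n q a R \<longleftrightarrow>
     supported n 2 R \<and>
     (\<exists>Ri. supported n 2 Ri \<and> H2mul n q R Ri = tone 2 \<and> H2mul n q Ri R = tone 2 \<and>
        (\<forall>h. supported n 1 h \<longrightarrow>
             Delta_op n q a h = H2mul n q (H2mul n q R (Delta n q a h)) Ri)) \<and>
     Delta_id n q a R = H3mul n q (R13 R) (R23 R) \<and>
     id_Delta n q a R = H3mul n q (R13 R) (R12 R)"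

definition Eidem :: "nat \<Rightarrow> 'k::field \<Rightarrow> nat \<Rightarrow> 'k tens" where
  "Eidem n q j = tscale (inverse (of_nat (2*n)))
      (tsum (\<lambda>i. tscale (inverse q ^ (i*j)) (zpow n q i)) {..<2*n})"

definition Rmat :: "nat \<Rightarrow> 'k::field \<Rightarrow> 'k \<Rightarrow> 'k tens" where
  "Rmat n q a = tadd
     (tsum (\<lambda>(i,j). tscale ((-1) ^ (i*j)) (ttensor 1 1 (Eidem n q i) (Eidem n q j)))
           ({..<2*n} \<times> {..<2*n}))
     (tscale (2*a)
     (tsum (\<lambda>(i,j). tscale ((-1) ^ (i*(j+1)))
              (ttensor 1 1 (Hmul n q (Eidem n q i) xgen) (Hmul n q (Eidem n q j) xgen)))
           ({..<2*n} \<times> {..<2*n})))"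

definition primitive_root :: "nat \<Rightarrow> 'k::field \<Rightarrow> bool" where
  "primitive_root m q \<longleftrightarrow> q ^ m = 1 \<and> (\<forall>k. 0 < k \<and> k < m \<longrightarrow> q ^ k \<noteq> 1)"

end

theory Submission
  imports Defs
begin

(*
  Expand R in the basis z^i x^e.  The coefficient of z^s \<otimes> z^t (and of z^s x \<otimes> z^t x) is a
  double character sum over Z/2n: summing over j first forces q^t = (-1)^i, so only t \<in> {0, n}
  survives, and the remaining sum over i of fixed parity forces s \<in> {0, n}.  Hence, with K = z^n,
    R = (1\<otimes>1 + 1\<otimes>K + K\<otimes>1 - K\<otimes>K)/2 + a (x\<otimes>x + Kx\<otimes>x - x\<otimes>Kx + Kx\<otimes>Kx),
  whose inverse is its flip.  In this closed form the two coproduct identities and invertibility are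
  finite computations with basis words, and Delta^op(h) R = R Delta(h) needs checking only on the
  basis elements z^i and z^i x, since both sides are linear in h.
*)

section \<open>Multiplication on basis words\<close>

lemma tadd_apply: "tadd f g w = f w + g w"
  by (simp add: tadd_def)

lemma tscale_apply: "tscale c f w = c * f w"
  by (simp add: tscale_def)

lemma basis_el_apply: "basis_el u w = (if w = u then 1 else 0)"
  by (simp add: basis_el_def)

lemma basis_el_apply_length_neq: "length w \<noteq> length u \<Longrightarrow> basis_el u w = 0"
  by (auto simp: basis_el_def)

lemmas tens_apply = tadd_apply tscale_apply basis_el_apply

lemma Wd_Nil [simp]: "[] \<in> Wd n m \<longleftrightarrow> m = 0"
  by (auto simp: Wd_def)

lemma Wd_Cons [simp]:
  "x # w \<in> Wd n m \<longleftrightarrow> m \<noteq> 0 \<and> fst x < 2*n \<and> snd x < 2 \<and> w \<in> Wd n (m - 1)"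
  by (cases m) (auto simp: Wd_def)

lemma length_Wd: "w \<in> Wd n m \<Longrightarrow> length w = m"
  by (simp add: Wd_def)

lemma finite_Wd [simp]: "finite (Wd n m)"
proof (rule finite_subset)
  show "Wd n m \<subseteq> {w. set w \<subseteq> {..<2*n} \<times> {..<2} \<and> length w = m}"
    by (auto simp: Wd_def)
qed (rule finite_lists_length_eq, simp)

lemma wcoef_Nil [simp]: "wcoef q [] v = 1"
  by (simp add: wcoef_def)

lemma wcoef_Cons [simp]: "wcoef q (a # u) (c # v) = bcoef q a c * wcoef q u v"
  unfolding wcoef_def by (simp del: prod.lessThan_Suc add: prod.lessThan_Suc_shift)

lemma widx_Nil [simp]: "widx n [] v = []"
  by (simp add: widx_def)

lemma widx_Cons [simp]: "widx n (a # u) (c # v) = bidx n a c # widx n u v"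
  by (simp add: widx_def)

lemma bcoef_Pair [simp]: "bcoef q (i, e) (j, f) = (if e + f < 2 then inverse q ^ (e * j) else 0)"
  by (simp add: bcoef_def)

lemma bidx_Pair [simp]: "bidx n (i, e) (j, f) = ((i + j) mod (2*n), e + f)"
  by (simp add: bidx_def)

lemma tmul_basis_el:
  assumes "u \<in> Wd n m" "v \<in> Wd n m"
  shows "tmul n q m (basis_el u) (basis_el v) = tscale (wcoef q u v) (basis_el (widx n u v))"
proof
  fix w
  let ?c = "if widx n u v = w then wcoef q u v else 0"
  have "tmul n q m (basis_el u) (basis_el v) w =
        (\<Sum>u'\<in>Wd n m. \<Sum>v'\<in>Wd n m. if u' = u then (if v' = v then ?c else 0) else 0)"
    unfolding tmul_def basis_el_def by (intro sum.cong refl) auto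
  also have "\<dots> = (\<Sum>u'\<in>Wd n m. if u' = u then (\<Sum>v'\<in>Wd n m. if v' = v then ?c else 0) else 0)"
    by (intro sum.cong refl) auto
  finally show "tmul n q m (basis_el u) (basis_el v) w = tscale (wcoef q u v) (basis_el (widx n u v)) w"
    using assms by (simp add: tens_apply)
qed

lemma wcoef_eq_0_if_widx_notin_Wd:
  "u \<in> Wd n m \<Longrightarrow> v \<in> Wd n m \<Longrightarrow> widx n u v \<notin> Wd n m \<Longrightarrow> wcoef q u v = 0"
proof (induction u arbitrary: v m)
  case Nil
  then show ?case by (auto simp: Wd_def)
next
  case (Cons b u)
  then obtain c v' where v: "v = c # v'"
    by (cases v) (auto simp: Wd_def)
  show ?case
  proof (cases "snd b + snd c < 2")
    case True
    then have "widx n u v' \<notin> Wd n (m - 1)"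
      using Cons.prems by (cases b, cases c) (auto simp: v)
    then show ?thesis
      using Cons.prems Cons.IH[of "m - 1" v'] by (simp add: v)
  qed (simp add: v bcoef_def)
qed

lemma tscale_tscale [simp]: "tscale c (tscale d f) = tscale (c * d) (f :: 'a::semigroup_mult tens)"
  by (simp add: tscale_def fun_eq_iff mult.assoc)

lemma tscale_0 [simp]: "tscale (0::'a::mult_zero) f = tzero"
  by (simp add: tscale_def tzero_def)

lemma tscale_tzero [simp]: "tscale (c::'a::mult_zero) tzero = tzero"
  by (simp add: tscale_def tzero_def)

lemma tscale_1 [simp]: "tscale (1::'a::monoid_mult) f = f"
  by (simp add: tscale_def)

lemma tscale_tadd [simp]: "tscale c (tadd f g) = tadd (tscale c f) (tscale c (g :: 'a::semiring tens))"
  by (simp add: tscale_def tadd_def fun_eq_iff distrib_left)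

lemma tadd_tzero [simp]: "tadd tzero f = f" "tadd f tzero = (f :: 'a::monoid_add tens)"
  by (simp_all add: tadd_def tzero_def)

lemma tmul_tscale_left [simp]: "tmul n q m (tscale c f) g = tscale c (tmul n q m f g)"
  by (simp add: tmul_def tscale_def fun_eq_iff sum_distrib_left mult_ac if_distrib cong: if_cong)

lemma tmul_tscale_right [simp]: "tmul n q m f (tscale c g) = tscale c (tmul n q m f g)"
  by (simp add: tmul_def tscale_def fun_eq_iff sum_distrib_left mult_ac if_distrib cong: if_cong)

lemma tmul_tzero [simp]: "tmul n q m tzero g = tzero" "tmul n q m g tzero = tzero"
  by (simp_all add: tmul_def tzero_def fun_eq_iff cong: if_cong)

lemma tmul_tadd_left [simp]: "tmul n q m (tadd f g) h = tadd (tmul n q m f h) (tmul n q m g h)"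
  by (simp add: tmul_def tadd_def fun_eq_iff sum.distrib[symmetric] algebra_simps if_distrib
      cong: if_cong)

lemma tmul_tadd_right [simp]: "tmul n q m h (tadd f g) = tadd (tmul n q m h f) (tmul n q m h g)"
  by (simp add: tmul_def tadd_def fun_eq_iff sum.distrib[symmetric] algebra_simps if_distrib
      cong: if_cong)

lemma if_sum_distrib: "(if P then sum f A else 0) = (\<Sum>a\<in>A. if P then f a else 0)"
  by simp

lemma tmul_tsum_left: "tmul n q m (tsum F A) g = tsum (\<lambda>a. tmul n q m (F a) g) A"
proof
  fix w
  have "tmul n q m (tsum F A) g w = (\<Sum>u\<in>Wd n m. \<Sum>v\<in>Wd n m. \<Sum>a\<in>A.
          if widx n u v = w then F a u * g v * wcoef q u v else 0)"
    unfolding tmul_def tsum_def by (simp add: sum_distrib_right if_sum_distrib cong: if_cong)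
  also have "\<dots> = (\<Sum>a\<in>A. \<Sum>u\<in>Wd n m. \<Sum>v\<in>Wd n m.
          if widx n u v = w then F a u * g v * wcoef q u v else 0)"
    by (simp only: sum.swap[of _ A])
  finally show "tmul n q m (tsum F A) g w = tsum (\<lambda>a. tmul n q m (F a) g) A w"
    unfolding tmul_def tsum_def .
qed

lemma tmul_tsum_right: "tmul n q m g (tsum F A) = tsum (\<lambda>a. tmul n q m g (F a)) A"
proof
  fix w
  have "tmul n q m g (tsum F A) w = (\<Sum>u\<in>Wd n m. \<Sum>v\<in>Wd n m. \<Sum>a\<in>A.
          if widx n u v = w then g u * F a v * wcoef q u v else 0)"
    unfolding tmul_def tsum_def
    by (simp add: sum_distrib_right sum_distrib_left if_sum_distrib cong: if_cong)
  also have "\<dots> = (\<Sum>a\<in>A. \<Sum>u\<in>Wd n m. \<Sum>v\<in>Wd n m.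
          if widx n u v = w then g u * F a v * wcoef q u v else 0)"
    by (simp only: sum.swap[of _ A])
  finally show "tmul n q m g (tsum F A) w = tsum (\<lambda>a. tmul n q m g (F a)) A w"
    unfolding tmul_def tsum_def .
qed

lemma tsum_cong: "(\<And>a. a \<in> A \<Longrightarrow> F a = G a) \<Longrightarrow> tsum F A = tsum G A"
  unfolding tsum_def by (rule ext) (rule sum.cong, auto)

lemma tmul_expand_left:
  "tmul n q m f g = tsum (\<lambda>v. tscale (f v) (tmul n q m (basis_el v) g)) (Wd n m)"
proof -
  have "tmul n q m f g = tmul n q m (tsum (\<lambda>v. tscale (f v) (basis_el v)) (Wd n m)) g"
    unfolding tmul_def tsum_def tscale_def basis_el_def
    by (rule ext) (intro sum.cong refl, simp add: if_distrib[of "\<lambda>x. _ * x"] cong: if_cong)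
  then show ?thesis
    by (simp add: tmul_tsum_left)
qed

lemma tmul_expand_right:
  "tmul n q m f g = tsum (\<lambda>v. tscale (g v) (tmul n q m f (basis_el v))) (Wd n m)"
proof -
  have "tmul n q m f g = tmul n q m f (tsum (\<lambda>v. tscale (g v) (basis_el v)) (Wd n m))"
    unfolding tmul_def tsum_def tscale_def basis_el_def
    by (rule ext) (intro sum.cong refl, simp add: if_distrib[of "\<lambda>x. _ * x"] cong: if_cong)
  then show ?thesis
    by (simp add: tmul_tsum_right)
qed

lemma power_mod_eq: "(x::'a::monoid_mult) ^ N = 1 \<Longrightarrow> x ^ (k mod N) = x ^ k"
  by (metis mult_div_mod_eq power_add power_mult power_one mult_1)

lemma bcoef_assoc:
  assumes "inverse q ^ (2*n) = 1"
  shows "bcoef q a b * bcoef q (bidx n a b) c = bcoef q b c * bcoef q a (bidx n b c)"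
proof -
  obtain i e j f k g where abc: "a = (i, e)" "b = (j, f)" "c = (k, g)"
    by (cases a, cases b, cases c)
  have "inverse q ^ ((j + k) mod (2*n)) = inverse q ^ (j + k)"
    using assms by (rule power_mod_eq)
  moreover have "2 \<le> e + f + g \<or> (e = 0 \<and> f = 0 \<and> g = 0) \<or> (e = 1 \<and> f = 0 \<and> g = 0) \<or>
      (e = 0 \<and> f = 1 \<and> g = 0) \<or> (e = 0 \<and> f = 0 \<and> g = 1)"
    by arith
  ultimately show ?thesis
    by (elim disjE) (simp_all add: abc power_add)
qed

lemma wcoef_assoc:
  assumes "inverse q ^ (2*n) = 1" "length u = length v" "length v = length w"
  shows "wcoef q u v * wcoef q (widx n u v) w = wcoef q v w * wcoef q u (widx n v w)"
  using assms(2,3)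
proof (induction u arbitrary: v w)
  case (Cons a u)
  then obtain b v' c w' where vw: "v = b # v'" "w = c # w'"
    by (cases v; cases w) auto
  have IH: "wcoef q u v' * wcoef q (widx n u v') w' = wcoef q v' w' * wcoef q u (widx n v' w')"
    using Cons by (simp add: vw)
  have "wcoef q (a # u) v * wcoef q (widx n (a # u) v) w =
        (bcoef q a b * bcoef q (bidx n a b) c) * (wcoef q u v' * wcoef q (widx n u v') w')"
    by (simp add: vw mult_ac)
  also have "\<dots> = (bcoef q b c * bcoef q a (bidx n b c)) * (wcoef q v' w' * wcoef q u (widx n v' w'))"
    using assms(1) by (simp only: bcoef_assoc IH)
  also have "\<dots> = wcoef q v w * wcoef q (a # u) (widx n v w)"
    by (simp add: vw mult_ac)
  finally show ?case .
qed simp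

lemma bidx_assoc: "bidx n (bidx n a b) c = bidx n a (bidx n b c)"
  by (cases a; cases b; cases c) (simp add: mod_add_left_eq mod_add_right_eq add.assoc)

lemma widx_assoc:
  "length u = length v \<Longrightarrow> length v = length w \<Longrightarrow> widx n (widx n u v) w = widx n u (widx n v w)"
proof (induction u arbitrary: v w)
  case (Cons a u)
  then obtain b v' c w' where "v = b # v'" "w = c # w'"
    by (cases v; cases w) auto
  with Cons show ?case
    by (simp add: bidx_assoc)
qed simp

lemma tmul_basis_el_assoc:
  assumes q: "inverse q ^ (2*n) = 1" and uvw: "u \<in> Wd n m" "v \<in> Wd n m" "w \<in> Wd n m"
  shows "tmul n q m (tmul n q m (basis_el u) (basis_el v)) (basis_el w) =
         tmul n q m (basis_el u) (tmul n q m (basis_el v) (basis_el w))"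
proof -
  have len: "length u = m" "length v = m" "length w = m"
    using uvw by (simp_all add: length_Wd)
  have "tmul n q m (tmul n q m (basis_el u) (basis_el v)) (basis_el w) =
        tscale (wcoef q u v * wcoef q (widx n u v) w) (basis_el (widx n (widx n u v) w))"
    using uvw wcoef_eq_0_if_widx_notin_Wd[of u n m v q]
    by (cases "widx n u v \<in> Wd n m") (simp_all add: tmul_basis_el)
  also have "\<dots> = tscale (wcoef q v w * wcoef q u (widx n v w)) (basis_el (widx n u (widx n v w)))"
    using q len by (simp add: wcoef_assoc widx_assoc)
  also have "\<dots> = tmul n q m (basis_el u) (tmul n q m (basis_el v) (basis_el w))"
    using uvw wcoef_eq_0_if_widx_notin_Wd[of v n m w q]
    by (cases "widx n v w \<in> Wd n m") (simp_all add: tmul_basis_el mult.commute)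
  finally show ?thesis .
qed

lemma tmul_assoc:
  assumes "q ^ (2*n) = 1"
  shows "tmul n q m (tmul n q m f g) h = tmul n q m f (tmul n q m g h)"
proof
  fix x
  have q: "inverse q ^ (2*n) = 1"
    using assms by (simp add: power_inverse)
  let ?W = "Wd n m" and ?b = "basis_el :: (nat \<times> nat) list \<Rightarrow> _"
  let ?T = "\<lambda>u v w. tmul n q m (tmul n q m (?b u) (?b v)) (?b w)"
  have "\<And>X. tmul n q m X h = tsum (\<lambda>w. tscale (h w) (tmul n q m X (?b w))) ?W"
    "tmul n q m f g = tsum (\<lambda>u. tscale (f u) (tmul n q m (?b u) g)) ?W"
    "\<And>u. tmul n q m (?b u) g = tsum (\<lambda>v. tscale (g v) (tmul n q m (?b u) (?b v))) ?W"
    by (rule tmul_expand_right tmul_expand_left)+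
  then have L: "tmul n q m (tmul n q m f g) h =
     tsum (\<lambda>u. tscale (f u) (tsum (\<lambda>v. tscale (g v) (tsum (\<lambda>w. tscale (h w) (?T u v w)) ?W)) ?W)) ?W"
    by (simp only: tmul_tsum_left tmul_tscale_left)
  have "\<And>X. tmul n q m f X = tsum (\<lambda>u. tscale (f u) (tmul n q m (?b u) X)) ?W"
    "tmul n q m g h = tsum (\<lambda>v. tscale (g v) (tmul n q m (?b v) h)) ?W"
    "\<And>v. tmul n q m (?b v) h = tsum (\<lambda>w. tscale (h w) (tmul n q m (?b v) (?b w))) ?W"
    by (rule tmul_expand_right tmul_expand_left)+
  then have R: "tmul n q m f (tmul n q m g h) =
     tsum (\<lambda>v. tscale (g v) (tsum (\<lambda>w. tscale (h w) (tsum (\<lambda>u. tscale (f u)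
        (tmul n q m (?b u) (tmul n q m (?b v) (?b w)))) ?W)) ?W)) ?W"
    by (simp only: tmul_tsum_right tmul_tscale_right)
  have "tmul n q m (tmul n q m f g) h x =
      (\<Sum>u\<in>?W. \<Sum>v\<in>?W. \<Sum>w\<in>?W. f u * (g v * (h w * ?T u v w x)))"
    unfolding L tsum_def tscale_def by (simp add: sum_distrib_left)
  also have "\<dots> = (\<Sum>v\<in>?W. \<Sum>u\<in>?W. \<Sum>w\<in>?W. f u * (g v * (h w * ?T u v w x)))"
    by (rule sum.swap)
  also have "\<dots> = (\<Sum>v\<in>?W. \<Sum>w\<in>?W. \<Sum>u\<in>?W. f u * (g v * (h w * ?T u v w x)))"
    by (rule sum.cong[OF refl], rule sum.swap)
  also have "\<dots> = tmul n q m f (tmul n q m g h) x"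
    unfolding R tsum_def tscale_def using q by (simp add: sum_distrib_left tmul_basis_el_assoc mult_ac)
  finally show "tmul n q m (tmul n q m f g) h x = tmul n q m f (tmul n q m g h) x" .
qed

lemma supported_tmul: "supported n m (tmul n q m f g)"
  unfolding supported_def tmul_def
  by (auto intro!: sum.neutral dest: wcoef_eq_0_if_widx_notin_Wd[where q = q])

lemma supported_basis_el: "u \<in> Wd n m \<Longrightarrow> supported n m (basis_el u)"
  by (auto simp: supported_def basis_el_def)

lemma supported_tadd:
  "supported n m f \<Longrightarrow> supported n m g \<Longrightarrow> supported n m (tadd f (g :: 'a::monoid_add tens))"
  by (auto simp: supported_def tadd_def)

lemma supported_tscale: "supported n m f \<Longrightarrow> supported n m (tscale (c::'a::mult_zero) f)"
  by (auto simp: supported_def tscale_def)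

lemma supported_flip2: "supported n 2 f \<Longrightarrow> supported n 2 (flip2 f)"
  unfolding supported_def flip2_def by (auto simp: Wd_def)

lemma tsum_basis_el_eq: "supported n m (f :: 'a::semiring_1 tens) \<Longrightarrow>
    tsum (\<lambda>v. tscale (f v) (basis_el v)) (Wd n m) = f"
  unfolding supported_def tsum_def tscale_def basis_el_def
  by (rule ext) (simp add: if_distrib[of "\<lambda>x. _ * x"] sum.delta' cong: if_cong)

lemma tmul_tone_right:
  assumes "n \<ge> 1" "supported n m f"
  shows "tmul n q m f (tone m) = f"
proof -
  have one: "replicate m (0, 0) \<in> Wd n m"
    using assms(1) by (auto simp: Wd_def)
  have "\<And>w. w \<in> Wd n m \<Longrightarrow> wcoef q w (replicate m (0, 0)) = 1 \<and> widx n w (replicate m (0, 0)) = w"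
    by (induction m) (auto simp: Wd_def length_Suc_conv)
  then have "tmul n q m f (tone m) = tsum (\<lambda>v. tscale (f v) (basis_el v)) (Wd n m)"
    using one by (subst tmul_expand_left) (intro tsum_cong, simp add: tone_def tmul_basis_el)
  with assms(2) show ?thesis
    by (simp add: tsum_basis_el_eq)
qed

section \<open>Tensor products, flip and legs\<close>

lemma ttensor_basis_el:
  "length u = m1 \<Longrightarrow> length v = m2 \<Longrightarrow>
    ttensor m1 m2 (basis_el u) (basis_el v) = (basis_el (u @ v) :: 'a::semiring_1 tens)"
proof
  fix w
  assume "length u = m1" "length v = m2"
  then have split: "length w = m1 + m2 \<and> take m1 w = u \<and> drop m1 w = v \<longleftrightarrow> w = u @ v"
    by (metis append_eq_conv_conj length_append)
  show "ttensor m1 m2 (basis_el u) (basis_el v) w = (basis_el (u @ v) w :: 'a)"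
    unfolding ttensor_def basis_el_def split[symmetric] by simp
qed

lemma ttensor_tadd_left [simp]:
  "ttensor m1 m2 (tadd f g) h = tadd (ttensor m1 m2 f h) (ttensor m1 m2 g (h :: 'a::semiring_0 tens))"
  unfolding ttensor_def tadd_def by (rule ext) (simp add: distrib_right)

lemma ttensor_tadd_right [simp]:
  "ttensor m1 m2 h (tadd f g) = tadd (ttensor m1 m2 h f) (ttensor m1 m2 h (g :: 'a::semiring_0 tens))"
  unfolding ttensor_def tadd_def by (rule ext) (simp add: distrib_left)

lemma ttensor_tscale_left [simp]:
  "ttensor m1 m2 (tscale c f) h = tscale c (ttensor m1 m2 f (h :: 'a::comm_semiring_0 tens))"
  unfolding ttensor_def tscale_def by (rule ext) (simp add: mult.assoc)

lemma ttensor_tscale_right [simp]: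
  "ttensor m1 m2 h (tscale c f) = tscale c (ttensor m1 m2 h (f :: 'a::comm_semiring_0 tens))"
  unfolding ttensor_def tscale_def by (rule ext) (simp add: mult.left_commute)

lemma flip2_tadd [simp]: "flip2 (tadd f g) = tadd (flip2 f) (flip2 g)"
  by (simp add: flip2_def tadd_def)

lemma flip2_tscale [simp]: "flip2 (tscale c f) = tscale c (flip2 f)"
  by (simp add: flip2_def tscale_def)

lemma flip2_tsum: "flip2 (tsum F A) = tsum (\<lambda>a. flip2 (F a)) A"
  by (simp add: flip2_def tsum_def)

lemma flip2_basis_el [simp]: "flip2 (basis_el [x, y]) = basis_el [y, x]"
  by (rule ext) (simp add: flip2_def basis_el_def rev_swap)

lemma linext_eq_tsum: "linext n m D f = tsum (\<lambda>u. tscale (f u) (D u)) (Wd n m)"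
  by (simp add: linext_def tsum_def tscale_def)

lemma linext_tadd [simp]: "linext n m D (tadd f g) = tadd (linext n m D f) (linext n m D g)"
  by (rule ext) (simp add: linext_def tadd_def algebra_simps sum.distrib)

lemma linext_tscale [simp]: "linext n m D (tscale c f) = tscale c (linext n m D f)"
  by (rule ext) (simp add: linext_def tscale_def sum_distrib_left mult.assoc)

lemma linext_basis_el: "u \<in> Wd n m \<Longrightarrow> linext n m D (basis_el u) = D u"
  unfolding linext_def basis_el_def by (rule ext) (simp add: if_distrib[of "\<lambda>x. x * _"] cong: if_cong)

lemma R13_tadd [simp]: "R13 (tadd f g) = tadd (R13 f) (R13 (g :: 'a::semiring_1 tens))"
  by (rule ext) (simp add: R13_def tadd_def algebra_simps)

lemma R13_tscale [simp]: "R13 (tscale c f) = tscale c (R13 (f :: 'a::semiring_1 tens))"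
  by (rule ext) (simp add: R13_def tscale_def algebra_simps)

lemma R13_basis_el: "R13 (basis_el [x, y]) = (basis_el [x, (0, 0), y] :: 'a::semiring_1 tens)"
  unfolding R13_def basis_el_def tone_def
  by (rule ext) (auto simp: numeral_3_eq_3 length_Suc_conv)

lemma tone_eq:
  "tone 1 = basis_el [(0, 0)]" "tone 2 = basis_el [(0, 0), (0, 0)]"
  "tone 3 = basis_el [(0, 0), (0, 0), (0, 0)]"
  by (simp_all add: tone_def numeral_2_eq_2 numeral_3_eq_3)

lemma R12_eq: "R12 R = ttensor 2 1 R (basis_el [(0, 0)])"
  by (simp add: R12_def tone_def)

lemma R23_eq: "R23 R = ttensor 1 2 (basis_el [(0, 0)]) R"
  by (simp add: R23_def tone_def)

lemma tens2_eqI: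
  assumes "\<And>i d j e. f [(i, d), (j, e)] = g [(i, d), (j, e)]"
    and "\<And>w. length w \<noteq> 2 \<Longrightarrow> f w = g w"
  shows "f = g"
proof
  fix w
  show "f w = g w"
    using assms by (cases "length w = 2") (auto simp: numeral_2_eq_2 length_Suc_conv)
qed

lemma tsum_basis_el_apply:
  "tsum (\<lambda>i. tscale (c i) (basis_el [(i, e)])) {..<M} [(x, d)] =
     (if d = e \<and> x < M then c x else 0 :: 'a::semiring_1)"
proof -
  have "tsum (\<lambda>i. tscale (c i) (basis_el [(i, e)])) {..<M} [(x, d)] =
        (\<Sum>i<M. if i = x then (if d = e then c i else 0) else 0)"
    unfolding tsum_def by (intro sum.cong refl) (auto simp: tens_apply)
  then show ?thesis
    by simp
qed

section \<open>Roots of unity and character sums\<close>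

lemma sum_lessThan_double:
  "(\<Sum>s<2*(m::nat). f s) = (\<Sum>r<m. f (2*r)) + (\<Sum>r<m. (f (2*r + 1) :: 'a::comm_monoid_add))"
  by (induction m) (simp_all add: algebra_simps)

lemma sum_sum_if_mult:
  "(\<Sum>s\<in>A. \<Sum>t\<in>B. c s t * ((if P then f s else 0) * (if Q then g t else 0))) =
   (if P \<and> Q then \<Sum>s\<in>A. \<Sum>t\<in>B. c s t * (f s * g t) else (0::'a::semiring_0))"
  by (cases P; cases Q) simp_all

locale H4n =
  fixes n :: nat and q a :: "'k::field_char_0"
  assumes n_ge_1: "1 \<le> n" and primitive: "primitive_root (2*n) q"
begin

abbreviation "p \<equiv> inverse q"

lemma q_pow_2n: "q ^ (2*n) = 1"
  using primitive by (simp add: primitive_root_def)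

lemma q_pow_n: "q ^ n = -1"
proof -
  have "q ^ n * q ^ n = 1"
    using q_pow_2n by (simp flip: power_add mult_2)
  moreover have "q ^ n \<noteq> 1"
    using primitive n_ge_1 by (simp add: primitive_root_def)
  ultimately show ?thesis
    by (simp add: square_eq_1_iff)
qed

lemma p_pow_2n [simp]: "p ^ (2*n) = 1"
  using q_pow_2n by (simp add: power_inverse)

lemma p_pow_n [simp]: "p ^ n = -1"
  using q_pow_n by (simp add: power_inverse)

lemma index_simps [simp]:
  "0 < n" "n \<noteq> 0" "n < 2*n" "Suc 0 < 2*n" "1 mod (2*n) = 1" "n mod (2*n) = n" "(n + n) mod (2*n) = 0"
  "i mod (2*n) < 2*n"
  using n_ge_1 by (simp_all flip: mult_2)

lemma p_pow_eq_1_iff: "k < 2*n \<Longrightarrow> p ^ k = 1 \<longleftrightarrow> k = 0"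
  using primitive by (auto simp: primitive_root_def power_inverse)

lemma p_pow_eq_minus_1_iff: "k < 2*n \<Longrightarrow> p ^ k = -1 \<longleftrightarrow> k = n"
proof
  assume k: "k < 2*n" and pk: "p ^ k = -1"
  show "k = n"
  proof (cases "k < n")
    case True
    then have "p ^ (k + n) = 1"
      using pk by (simp add: power_add)
    with True show ?thesis
      using p_pow_eq_1_iff[of "k + n"] by simp
  next
    case False
    then have "p ^ k = p ^ (k - n) * p ^ n"
      by (metis le_add_diff_inverse2 not_less power_add)
    then have "p ^ (k - n) = 1"
      using pk by simp
    with k False show ?thesis
      using p_pow_eq_1_iff[of "k - n"] by simp
  qed
qed simp

lemma sum_p_pow_double:
  assumes "x < 2*n"
  shows "(\<Sum>k<n. (p ^ (2*x)) ^ k) = (if x = 0 \<or> x = n then of_nat n else 0)"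
proof -
  have "(p ^ (2*x)) ^ n = (p ^ (2*n)) ^ x"
    by (simp flip: power_mult add: mult_ac)
  then have root: "(p ^ (2*x)) ^ n = 1"
    by simp
  have "p ^ (2*x) = p ^ x * p ^ x"
    by (simp add: mult_2 power_add)
  then have "p ^ (2*x) = 1 \<longleftrightarrow> p ^ x = 1 \<or> p ^ x = -1"
    by (simp add: square_eq_1_iff)
  also have "\<dots> \<longleftrightarrow> x = 0 \<or> x = n"
    using assms by (simp add: p_pow_eq_1_iff p_pow_eq_minus_1_iff)
  finally show ?thesis
    using root by (simp add: sum_gp_strict)
qed

lemma character_sum:
  assumes "y < 2*n"
  shows "(\<Sum>t<2*n. (-1) ^ (s*t) * p ^ (y*t)) = (if p ^ y = (-1) ^ s then of_nat (2*n) else 0)"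
proof -
  let ?r = "(-1) ^ s * p ^ y :: 'k"
  have "?r ^ (2*n) = ((-1) ^ (2*n)) ^ s * (p ^ (2*n)) ^ y"
    by (simp add: power_mult_distrib flip: power_mult add: mult_ac)
  then have "?r ^ (2*n) = 1"
    by simp
  moreover have "?r = 1 \<longleftrightarrow> p ^ y = (-1) ^ s"
  proof -
    have sign: "(-1) ^ s * (-1) ^ s = (1::'k)"
      by (simp flip: power_mult_distrib)
    show ?thesis
    proof
      assume "?r = 1"
      have "p ^ y = ((-1) ^ s * (-1) ^ s) * p ^ y"
        by (simp add: sign)
      also have "\<dots> = (-1) ^ s"
        using \<open>?r = 1\<close> by (simp only: mult.assoc mult_1_right)
      finally show "p ^ y = (-1) ^ s" .
    qed (simp add: sign)
  qed
  moreover have "(\<Sum>t<2*n. (-1) ^ (s*t) * p ^ (y*t)) = (\<Sum>t<2*n. ?r ^ t)"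
    by (simp add: power_mult power_mult_distrib)
  ultimately show ?thesis
    by (simp add: sum_gp_strict)
qed

lemma double_character_sum:
  assumes y: "y < 2*n"
  shows "(\<Sum>s<2*n. \<Sum>t<2*n. (-1) ^ (s*t) * (r ^ s * p ^ (y*t))) =
    of_nat (2*n) * (if y = 0 then \<Sum>k<n. (r^2) ^ k else if y = n then r * (\<Sum>k<n. (r^2) ^ k) else 0)"
proof -
  have "(\<Sum>s<2*n. \<Sum>t<2*n. (-1) ^ (s*t) * (r ^ s * p ^ (y*t))) =
        (\<Sum>s<2*n. r ^ s * (\<Sum>t<2*n. (-1) ^ (s*t) * p ^ (y*t)))"
    by (simp add: sum_distrib_left mult.left_commute)
  also have "\<dots> = (\<Sum>s<2*n. r ^ s * (if p ^ y = (-1) ^ s then of_nat (2*n) else 0))"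
    using y by (intro sum.cong refl) (simp add: character_sum)
  also have "\<dots> = of_nat (2*n) * (\<Sum>s<2*n. if p ^ y = (-1) ^ s then r ^ s else 0)"
    by (auto simp: sum_distrib_left intro!: sum.cong)
  also have "(\<Sum>s<2*n. if p ^ y = (-1) ^ s then r ^ s else 0) =
      (\<Sum>k<n. if p ^ y = 1 then (r^2) ^ k else 0) + (\<Sum>k<n. if p ^ y = -1 then r * (r^2) ^ k else 0)"
    by (simp add: sum_lessThan_double power_mult cong: if_cong)
  also have "\<dots> = (if y = 0 then \<Sum>k<n. (r^2) ^ k else if y = n then r * (\<Sum>k<n. (r^2) ^ k) else 0)"
    using y by (simp add: p_pow_eq_1_iff p_pow_eq_minus_1_iff sum_distrib_left flip: if_sum_distrib)
  finally show ?thesis .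
qed

section \<open>Coproduct on the basis\<close>

lemmas basis_mult_simps = tmul_basis_el Hmul_def H2mul_def H3mul_def
  mod_Suc_eq mod_add_eq mod_add_left_eq mod_add_right_eq

lemma zpow_eq: "zpow n q i = basis_el [(i mod (2*n), 0)]"
proof (induction i)
  case (Suc i)
  have "zpow n q (Suc i) = tmul n q 1 (zpow n q i) (zgen n)"
    by (simp add: zpow_def)
  then show ?case
    by (simp add: Suc zgen_def basis_mult_simps)
qed (simp add: zpow_def tone_def)

lemma zpow_mult_xgen: "k < 2*n \<Longrightarrow> Hmul n q (basis_el [(k, 0)]) xgen = basis_el [(k, 1)]"
  by (simp add: xgen_def basis_mult_simps)

lemma tpow_Delta_z:
  "tpow n q 2 (Delta_z n q a) i =
     tadd (basis_el [(i mod (2*n), 0), (i mod (2*n), 0)])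
       (tscale (a * (1 - p ^ (2*i))) (basis_el [((n + i) mod (2*n), 1), (i mod (2*n), 1)]))"
proof (induction i)
  case 0
  then show ?case
    by (simp add: tone_eq)
next
  case (Suc i)
  have Delta_z: "Delta_z n q a = tadd (basis_el [(1, 0), (1, 0)])
      (tscale (a * (1 - p ^ 2)) (basis_el [((n + 1) mod (2*n), 1), (1, 1)]))"
    by (simp add: Delta_z_def zpow_eq zgen_def zpow_mult_xgen ttensor_basis_el)
  have "Suc (k + i mod (2*n)) mod (2*n) = Suc (k + i) mod (2*n)" for k
    by (metis add_Suc mod_add_right_eq)
  then have "tmul n q 2 (tpow n q 2 (Delta_z n q a) i) (Delta_z n q a) =
      tadd (basis_el [(Suc i mod (2*n), 0), (Suc i mod (2*n), 0)])
       (tscale (a * (1 - p ^ (2 * Suc i))) (basis_el [((n + Suc i) mod (2*n), 1), (Suc i mod (2*n), 1)]))"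
    unfolding Suc.IH unfolding Delta_z
    by (simp add: basis_mult_simps add_ac, simp add: fun_eq_iff tens_apply algebra_simps power2_eq_square)
  then show ?case
    by simp
qed

lemma Delta_basis_z:
  "i < 2*n \<Longrightarrow> Delta_basis n q a [(i, 0)] =
     tadd (basis_el [(i, 0), (i, 0)])
       (tscale (a * (1 - p ^ (2*i))) (basis_el [((n + i) mod (2*n), 1), (i, 1)]))"
  by (simp add: Delta_basis_def tpow_Delta_z tone_eq basis_mult_simps)

lemma Delta_basis_zx:
  "i < 2*n \<Longrightarrow> Delta_basis n q a [(i, Suc 0)] =
     tadd (basis_el [(i, 1), (i, 0)]) (basis_el [((n + i) mod (2*n), 0), (i, 1)])"
proof -
  have "Delta_x n q = tadd (basis_el [(0, 1), (0, 0)]) (basis_el [(n, 0), (0, 1)])"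
    by (simp add: Delta_x_def zpow_eq tone_def xgen_def ttensor_basis_el)
  moreover assume "i < 2*n"
  ultimately show ?thesis
    by (simp add: Delta_basis_def tpow_Delta_z tone_eq basis_mult_simps add_ac)
qed

lemma Delta_basis_el: "u \<in> Wd n 1 \<Longrightarrow> Delta n q a (basis_el u) = Delta_basis n q a u"
  unfolding Delta_def by (rule linext_basis_el)

section \<open>The R-matrix in closed form\<close>

lemma Eidem_apply:
  "Eidem n q s [(x, d)] = (if d = 0 \<and> x < 2*n then p ^ (x*s) / of_nat (2*n) else 0)"
proof -
  have "Eidem n q s =
      tscale (inverse (of_nat (2*n))) (tsum (\<lambda>i. tscale (p ^ (i*s)) (basis_el [(i, 0)])) {..<2*n})"
    unfolding Eidem_def by (intro arg_cong[where f = "tscale _"] tsum_cong) (simp add: zpow_eq)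
  then show ?thesis
    by (simp add: tscale_apply tsum_basis_el_apply field_simps)
qed

lemma Eidem_mult_xgen_apply:
  "Hmul n q (Eidem n q s) xgen [(x, d)] = (if d = 1 \<and> x < 2*n then p ^ (x*s) / of_nat (2*n) else 0)"
proof -
  have "Hmul n q (Eidem n q s) xgen =
      tscale (inverse (of_nat (2*n))) (tsum (\<lambda>i. tscale (p ^ (i*s)) (basis_el [(i, 1)])) {..<2*n})"
    unfolding Eidem_def Hmul_def tmul_tscale_left tmul_tsum_left
    by (intro arg_cong[where f = "tscale _"] tsum_cong) (simp add: zpow_eq xgen_def basis_mult_simps)
  then show ?thesis
    by (simp add: tscale_apply tsum_basis_el_apply field_simps)
qed

lemma Rmat_apply:
  "Rmat n q a [(x, d), (y, e)] =
     (if (d = 0 \<and> x < 2*n) \<and> (e = 0 \<and> y < 2*n) then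
        (\<Sum>s<2*n. \<Sum>t<2*n. (-1) ^ (s*t) * (p ^ (x*s) * p ^ (y*t))) / of_nat (2*n) ^ 2 else 0) +
     2 * a * (if (d = 1 \<and> x < 2*n) \<and> (e = 1 \<and> y < 2*n) then
        (\<Sum>s<2*n. \<Sum>t<2*n. (-1) ^ (s*(t+1)) * (p ^ (x*s) * p ^ (y*t))) / of_nat (2*n) ^ 2 else 0)"
proof -
  have pairs: "tsum (\<lambda>(i, j). F i j) (A \<times> B) w = (\<Sum>i\<in>A. \<Sum>j\<in>B. F i j w)"
    for F :: "nat \<Rightarrow> nat \<Rightarrow> 'k tens" and A B w
    unfolding tsum_def by (simp add: sum.cartesian_product split_def)
  have div: "c * (u / N * (v / N)) = c * (u * v) / N ^ 2" for c u v N :: 'k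
    by (simp add: power2_eq_square)
  have "Rmat n q a [(x, d), (y, e)] =
     (\<Sum>s<2*n. \<Sum>t<2*n. (-1) ^ (s*t) * (Eidem n q s [(x, d)] * Eidem n q t [(y, e)])) +
     2 * a * (\<Sum>s<2*n. \<Sum>t<2*n. (-1) ^ (s*(t+1)) *
        (Hmul n q (Eidem n q s) xgen [(x, d)] * Hmul n q (Eidem n q t) xgen [(y, e)]))"
    unfolding Rmat_def by (simp add: tadd_apply tscale_apply ttensor_def pairs sum_distrib_left)
  then show ?thesis
    unfolding Eidem_apply Eidem_mult_xgen_apply sum_sum_if_mult div
    by (simp only: sum_divide_distrib)
qed

lemma Rmat_coeff_sum:
  assumes x: "x < 2*n" and y: "y < 2*n"
  defines "G \<equiv> if x = 0 \<or> x = n then of_nat n else 0"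
  shows "(\<Sum>s<2*n. \<Sum>t<2*n. (-1) ^ (s*t) * (p ^ (x*s) * p ^ (y*t))) =
    of_nat (2*n) * (if y = 0 then G else if y = n then p ^ x * G else 0)"
proof -
  have "(p ^ x) ^ 2 = p ^ (2*x)"
    by (metis power_mult mult.commute)
  moreover have "(\<Sum>s<2*n. \<Sum>t<2*n. (-1) ^ (s*t) * (p ^ (x*s) * p ^ (y*t))) =
      (\<Sum>s<2*n. \<Sum>t<2*n. (-1) ^ (s*t) * ((p ^ x) ^ s * p ^ (y*t)))"
    by (simp only: power_mult)
  ultimately show ?thesis
    unfolding G_def by (simp only: double_character_sum[OF y] sum_p_pow_double[OF x])
qed

lemma Rmat_coeff_sum_x:
  assumes x: "x < 2*n" and y: "y < 2*n"
  defines "G \<equiv> if x = 0 \<or> x = n then of_nat n else 0"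
  shows "(\<Sum>s<2*n. \<Sum>t<2*n. (-1) ^ (s*(t+1)) * (p ^ (x*s) * p ^ (y*t))) =
    of_nat (2*n) * (if y = 0 then G else if y = n then - (p ^ x) * G else 0)"
proof -
  have "(- (p ^ x)) ^ 2 = p ^ (2*x)"
    by (metis power_mult mult.commute power2_minus)
  moreover have "(-1) ^ (s * (t + 1)) * (p ^ (x*s) * p ^ (y*t)) =
      (-1) ^ (s*t) * ((- (p ^ x)) ^ s * p ^ (y*t))" for s t :: nat
  proof -
    have "(- (p ^ x)) ^ s = (-1) ^ s * p ^ (x*s)"
      by (subst power_minus) (simp add: power_mult)
    then show ?thesis
      by (simp add: distrib_left power_add mult_ac)
  qed
  ultimately show ?thesis
    unfolding G_def by (simp only: double_character_sum[OF y] sum_p_pow_double[OF x])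
qed

definition R_closed :: "'k tens" where
  "R_closed =
     tadd (tscale (1/2) (basis_el [(0, 0), (0, 0)]))
    (tadd (tscale (1/2) (basis_el [(0, 0), (n, 0)]))
    (tadd (tscale (1/2) (basis_el [(n, 0), (0, 0)]))
    (tadd (tscale (-1/2) (basis_el [(n, 0), (n, 0)]))
    (tadd (tscale a (basis_el [(0, 1), (0, 1)]))
    (tadd (tscale a (basis_el [(n, 1), (0, 1)]))
    (tadd (tscale (-a) (basis_el [(0, 1), (n, 1)]))
          (tscale a (basis_el [(n, 1), (n, 1)]))))))))"

lemma Rmat_eq_R_closed: "Rmat n q a = R_closed"
proof (rule tens2_eqI)
  fix x d y e
  show "Rmat n q a [(x, d), (y, e)] = R_closed [(x, d), (y, e)]"
  proof (cases "x < 2*n \<and> y < 2*n")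
    case True
    then have x: "x < 2*n" and y: "y < 2*n"
      by auto
    show ?thesis
      unfolding Rmat_apply Rmat_coeff_sum[OF x y] Rmat_coeff_sum_x[OF x y] R_closed_def
      by (auto simp: tadd_apply tscale_apply basis_el_apply power2_eq_square)
  next
    case False
    then show ?thesis
      unfolding Rmat_apply R_closed_def by (auto simp: tadd_apply tscale_apply basis_el_apply)
  qed
next
  fix w :: "(nat \<times> nat) list"
  assume "length w \<noteq> 2"
  then show "Rmat n q a w = R_closed w"
    unfolding Rmat_def R_closed_def
    by (simp add: tadd_apply tscale_apply basis_el_apply_length_neq tsum_def ttensor_def split_def)
qed

lemma supported_R_closed: "supported n 2 R_closed"
  unfolding R_closed_def by (simp add: supported_tadd supported_tscale supported_basis_el)

lemma R_closed_mult_flip: "tmul n q 2 R_closed (flip2 R_closed) = tone 2"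
  unfolding R_closed_def tone_eq
  by (simp add: basis_mult_simps) (rule ext, simp add: tens_apply)

lemma flip_mult_R_closed: "tmul n q 2 (flip2 R_closed) R_closed = tone 2"
  unfolding R_closed_def tone_eq
  by (simp add: basis_mult_simps) (rule ext, simp add: tens_apply)

lemmas Delta_simps = Delta_basis_el Delta_basis_z Delta_basis_zx linext_basis_el ttensor_basis_el
  R13_basis_el R12_eq R23_eq

lemma Delta_id_R_closed: "Delta_id n q a R_closed = H3mul n q (R13 R_closed) (R23 R_closed)"
  unfolding R_closed_def Delta_id_def
  by (simp add: basis_mult_simps Delta_simps) (rule ext, simp add: tens_apply)

lemma id_Delta_R_closed: "id_Delta n q a R_closed = H3mul n q (R13 R_closed) (R12 R_closed)"
  unfolding R_closed_def id_Delta_def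
  by (simp add: basis_mult_simps Delta_simps) (rule ext, simp add: tens_apply)

lemma flip_Delta_basis_mult_R_closed:
  assumes i: "i < 2*n" and e: "e < 2"
  shows "tmul n q 2 (flip2 (Delta_basis n q a [(i, e)])) R_closed =
         tmul n q 2 R_closed (Delta_basis n q a [(i, e)])"
proof -
  define j where "j = (n + i) mod (2*n)"
  have j: "j < 2*n" "(n + i) mod (2*n) = j" "(i + n) mod (2*n) = j"
    "(n + j) mod (2*n) = i" "(j + n) mod (2*n) = i" "i \<noteq> j" "j \<noteq> i"
    using i n_ge_1 by (auto simp: j_def mod_if add.commute split: if_split_asm)
  have "p ^ j = p ^ (n + i)"
    unfolding j_def by (rule power_mod_eq) simp
  then have pj: "p ^ j = - (p ^ i)"
    by (simp add: power_add)
  have p2i: "p ^ (2*i) = p ^ i * p ^ i"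
    by (simp add: mult_2 power_add)
  from e have e01: "e = 0 \<or> e = Suc 0"
    by linarith
  show ?thesis
    unfolding R_closed_def
    by (rule disjE[OF e01];
        simp add: Delta_basis_z[OF i] Delta_basis_zx[OF i] j(2) basis_mult_simps i j pj p2i;
        rule tens2_eqI) (simp_all only: tens_apply, auto simp: j(6,7) algebra_simps)
qed

lemma flip_Delta_basis_eq_conj:
  assumes "u \<in> Wd n 1"
  shows "flip2 (Delta_basis n q a u) = tmul n q 2 (tmul n q 2 R_closed (Delta_basis n q a u)) (flip2 R_closed)"
proof -
  obtain i e where u: "u = [(i, e)]" "i < 2*n" "e < 2"
    using assms by (cases u) (auto simp: Wd_def)
  let ?D = "Delta_basis n q a u"
  have "tmul n q 2 (tmul n q 2 R_closed ?D) (flip2 R_closed) =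
        tmul n q 2 (tmul n q 2 (flip2 ?D) R_closed) (flip2 R_closed)"
    using u by (simp add: flip_Delta_basis_mult_R_closed)
  also have "\<dots> = tmul n q 2 (flip2 ?D) (tmul n q 2 R_closed (flip2 R_closed))"
    by (simp add: tmul_assoc q_pow_2n)
  also have "\<dots> = flip2 ?D"
    using n_ge_1 by (simp add: R_closed_mult_flip tmul_tone_right supported_flip2 supported_tmul
        Delta_basis_def H2mul_def)
  finally show ?thesis ..
qed

lemma Delta_op_eq_conj:
  "Delta_op n q a h = H2mul n q (H2mul n q R_closed (Delta n q a h)) (flip2 R_closed)"
proof -
  have Delta: "Delta n q a h = tsum (\<lambda>u. tscale (h u) (Delta_basis n q a u)) (Wd n 1)"
    unfolding Delta_def by (rule linext_eq_tsum)
  have "Delta_op n q a h = tsum (\<lambda>u. tscale (h u) (flip2 (Delta_basis n q a u))) (Wd n 1)"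
    unfolding Delta_op_def Delta by (simp add: flip2_tsum)
  also have "\<dots> = tsum (\<lambda>u. tscale (h u)
      (tmul n q 2 (tmul n q 2 R_closed (Delta_basis n q a u)) (flip2 R_closed))) (Wd n 1)"
    by (intro tsum_cong) (simp add: flip_Delta_basis_eq_conj)
  also have "\<dots> = H2mul n q (H2mul n q R_closed (Delta n q a h)) (flip2 R_closed)"
    unfolding Delta H2mul_def by (simp add: tmul_tsum_left tmul_tsum_right)
  finally show ?thesis .
qed

lemma quasi_triangular_R_closed: "quasi_triangular n q a R_closed"
  unfolding quasi_triangular_def
proof (intro conjI exI allI impI)
  show "supported n 2 (flip2 R_closed)"
    by (intro supported_flip2 supported_R_closed)
qed (simp_all add: supported_R_closed H2mul_def R_closed_mult_flip flip_mult_R_closed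
    Delta_op_eq_conj Delta_id_R_closed id_Delta_R_closed)

end

theorem mainTheorem3:
  fixes q a :: "'k::{alg_closed_field, field_char_0}" and n :: nat
  assumes "n \<ge> 1" and "primitive_root (2*n) q"
  shows "quasi_triangular n q a (Rmat n q a)"
proof -
  interpret H4n n q a
    using assms by unfold_locales
  show ?thesis
    using Rmat_eq_R_closed quasi_triangular_R_closed by simp
qed

end
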